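(* Let $N, D \ge 1$, let $X \in \mathbb{R}^{N\times D}$ have rows $x_1,\ldots,x_N$, and let $\lambda^2>0$, $\rho^2>0$. For $\sigma^2>0$ set $\theta = \exp(-\lambda^2/(2\sigma^2))$. For a clustering $(K^+, Z)$ define $p(X,Z) = p(X\mid Z)\,p(Z)$ where $p(Z) = \theta^{K^+-1}\frac{\Gamma(\theta+1)}{\Gamma(\theta+N)}\prod_{k=1}^{K^+}(S_{N,k}-1)!$ and $p(X\mid Z) = \int p(X \mid Z, A)\, p(A)\, dA$ with $p(X\mid Z,A) = (2\pi\sigma^2)^{-ND/2}\exp\{-\operatorname{tr}((X-ZA)'(X-ZA))/(2\sigma^2)\}$ and the rows of $A\in\mathbb{R}^{K^+\times D}$ i.i.d. $\mathcal{N}(0,\rho^2 I_D)$ under $p(A)$. Then for fixed $K^+, Z$, as $\sigma^2\to 0$, $$-2\sigma^2\log p(X,Z) \sim \operatorname{tr}\big(X'(I_N - Z(Z'Z)^{-1}Z')X\big) + (K^+-1)\lambda^2,$$ so the MAP problem for $Z$ is asymptotically equivalent to $\operatorname{argmin}_{K^+,Z} \operatorname{tr}(X'(I_N - Z(Z'Z)^{-1}Z')X) + (K^+-1)\lambda^2$, which equals $\operatorname{argmin}_{K^+,Z}\sum_{k=1}^{K^+}\sum_{n: z_{nk}=1}\|x_n - \bar x^{(k)}\|_2^2 + (K^+-1)\lambda^2$, where $\bar x^{(k)} = S_{N,k}^{-1}\sum_{m: z_{mk}=1} x_m$.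
   Context: A clustering is an integer $K^+\ge 1$ and a matrix $Z=(z_{nk})\in\{0,1\}^{N\times K^+}$ with exactly one $1$ in each row and every column nonzero; $S_{N,k}=\sum_n z_{nk}$. $p(Z)$ is the Chinese restaurant process probability with concentration $\theta$. $f(\sigma^2)\sim g(\sigma^2)$ means $f(\sigma^2)/g(\sigma^2)\to1$ as $\sigma^2\to0$. *)

theory Defs
  imports "HOL-Analysis.Analysis" "HOL-Probability.Probability" "HOL-Library.Landau_Symbols"
begin

text \<open>A clustering: rows of Z indexed by type 'n (N = CARD('n)), columns by type 'k
 (K+ = CARD('k)); entries in {0,1}, exactly one 1 per row, every column nonzero.\<close>
definition clustering :: "real^'k^'n \<Rightarrow> bool" where
  "clustering Z \<longleftrightarrow> (\<forall>n k. Z$n$k = 0 \<or> Z$n$k = 1) \<and> (\<forall>n. \<exists>!k. Z$n$k = 1)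
     \<and> (\<forall>k. \<exists>n. Z$n$k \<noteq> 0)"

definition csize :: "real^'k^'n \<Rightarrow> 'k \<Rightarrow> nat" where
  "csize Z k = card {n. Z$n$k = 1}"

definition crp_prob :: "real \<Rightarrow> real^'k^'n \<Rightarrow> real" where
  "crp_prob \<theta> Z = \<theta> ^ (CARD('k) - 1) * Gamma (\<theta> + 1) / Gamma (\<theta> + real CARD('n))
     * (\<Prod>k\<in>UNIV. fact (csize Z k - 1))"

definition lik :: "real \<Rightarrow> real^'d^'n \<Rightarrow> real^'k^'n \<Rightarrow> real^'d^'k \<Rightarrow> real" where
  "lik s2 X Z A = (2 * pi * s2) powr (- real (CARD('n) * CARD('d)) / 2)
     * exp (- trace (transpose (X - Z ** A) ** (X - Z ** A)) / (2 * s2))"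

text \<open>Prior density p(A): rows of A i.i.d. N(0, rho2 I_D), i.e. all entries i.i.d. N(0,rho2).\<close>
definition prior_dens :: "real \<Rightarrow> real^'d^'k \<Rightarrow> real" where
  "prior_dens rho2 A = (\<Prod>k\<in>UNIV. \<Prod>d\<in>UNIV. normal_density 0 (sqrt rho2) (A$k$d))"

definition marg_lik :: "real \<Rightarrow> real \<Rightarrow> real^'d^'n \<Rightarrow> real^'k^'n \<Rightarrow> real" where
  "marg_lik s2 rho2 X Z = (LINT A|lborel. lik s2 X Z A * prior_dens rho2 A)"

definition joint :: "real \<Rightarrow> real \<Rightarrow> real \<Rightarrow> real^'d^'n \<Rightarrow> real^'k^'n \<Rightarrow> real" where
  "joint lambda2 rho2 s2 X Z =
     marg_lik s2 rho2 X Z * crp_prob (exp (- lambda2 / (2 * s2))) Z"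

definition cmean :: "real^'d^'n \<Rightarrow> real^'k^'n \<Rightarrow> 'k \<Rightarrow> real^'d" where
  "cmean X Z k = (1 / real (csize Z k)) *\<^sub>R (\<Sum>m\<in>{m. Z$m$k = 1}. X$m)"

definition proj_obj :: "real \<Rightarrow> real^'d^'n \<Rightarrow> real^'k^'n \<Rightarrow> real" where
  "proj_obj lambda2 X Z =
     trace (transpose X ** (mat 1 - Z ** matrix_inv (transpose Z ** Z) ** transpose Z) ** X)
     + (real CARD('k) - 1) * lambda2"

definition kmeans_obj :: "real \<Rightarrow> real^'d^'n \<Rightarrow> real^'k^'n \<Rightarrow> real" where
  "kmeans_obj lambda2 X Z =
     (\<Sum>k\<in>UNIV. \<Sum>n\<in>{n. Z$n$k = 1}. (norm (X$n - cmean X Z k))\<^sup>2)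
     + (real CARD('k) - 1) * lambda2"

end

(*
  Every row of a clustering Z selects one cluster, so the rows of Z A are the rows a_k of A
  indexed by the cluster of each point, and Pythagoras around the cluster means splits
  tr((X - Z A)'(X - Z A)) into the within-cluster sum of squares W and the misfit
  sum_n |xbar_{c(n)} - a_{c(n)}|^2. W is also tr(X'(I - Z(Z'Z)^-1 Z')X), because Z(Z'Z)^-1 Z'
  replaces each row of X by its cluster mean. Hence
    p(X | Z) = (2 pi s)^(-ND/2) exp(-W/(2s)) J(s),
  where J(s) is the prior expectation of exp(-misfit/(2s)). Clearly J <= 1, and integrating
  over a box of half-width sqrt s around the cluster means gives J(s) >= c s^(KD/2), so that
  s ln J(s) -> 0. Similarly p(Z) = theta^(K-1) r(theta) with ln theta = -lambda^2/(2s) and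
  r(theta) -> Gamma(1)/Gamma(N) prod_k (S_k - 1)! > 0. Therefore
  -2 s ln p(X, Z) -> W + (K - 1) lambda^2, and a limit that is nonzero is an asymptotic
  equivalent.
*)

theory Submission
  imports Defs "HOL-Real_Asymp.Real_Asymp"
begin

definition diag_mat :: "('k \<Rightarrow> 'a::zero) \<Rightarrow> 'a^'k^'k" where
  "diag_mat a = (\<chi> i j. if i = j then a i else 0)"

lemma diag_mat_mult_row: "(diag_mat a ** M) $ i = a i *s M $ i"
proof -
  have "(\<Sum>k\<in>UNIV. (if i = k then a i else 0) * M $ k $ j) = a i * M $ i $ j" for j
    by (simp add: if_distrib[of "\<lambda>c. c * _"] cong: if_cong)
  then show ?thesis
    by (simp add: diag_mat_def matrix_matrix_mult_def vec_eq_iff)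
qed

lemma diag_mat_mult: "diag_mat a ** diag_mat b = diag_mat (\<lambda>i. a i * b i)"
  by (simp add: vec_eq_iff diag_mat_mult_row) (simp add: diag_mat_def)

lemma diag_mat_1: "diag_mat (\<lambda>_. 1) = mat 1"
  by (simp add: diag_mat_def mat_def)

lemma matrix_inv_unique:
  fixes A :: "'a::comm_ring_1^'n^'n"
  assumes "A ** B = mat 1" "B ** A = mat 1"
  shows "matrix_inv A = B"
proof -
  let ?B' = "matrix_inv A"
  have "A ** ?B' = mat 1 \<and> ?B' ** A = mat 1"
    unfolding matrix_inv_def by (rule someI[of _ B]) (use assms in blast)
  then have "?B' = (?B' ** A) ** B"
    using assms by (metis matrix_mul_assoc matrix_mul_rid)
  with \<open>A ** ?B' = mat 1 \<and> ?B' ** A = mat 1\<close> show ?thesis by simp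
qed

lemma matrix_inv_diag_mat:
  fixes a :: "'k::finite \<Rightarrow> 'a::field"
  assumes "\<And>i. a i \<noteq> 0"
  shows "matrix_inv (diag_mat a) = diag_mat (\<lambda>i. inverse (a i))"
  by (rule matrix_inv_unique) (simp_all add: diag_mat_mult assms flip: diag_mat_1)

lemma trace_transpose_mult:
  fixes Y W :: "real^'d^'n"
  shows "trace (transpose Y ** W) = (\<Sum>n\<in>UNIV. Y $ n \<bullet> W $ n)"
  unfolding trace_def inner_vec_def
  by (simp add: matrix_matrix_mult_def transpose_def) (rule sum.swap)

lemma matrix_mult_diff_rdistrib:
  fixes A B :: "'a::ring_1^'n^'m"
  shows "(A - B) ** C = A ** C - B ** C"
  by (simp add: matrix_matrix_mult_def vec_eq_iff sum_subtractf left_diff_distrib)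

lemma Basis_matrix_cases:
  assumes "(b::real^'d^'k) \<in> Basis"
  obtains k d where "b = axis k (axis d 1)"
  using assms unfolding Basis_vec_def Basis_real_def by auto

lemma inner_axis_axis: "(A::real^'d^'k) \<bullet> axis k (axis d 1) = A $ k $ d"
  by (simp add: inner_axis)

lemma measure_lborel_cbox_centered:
  fixes M :: "'a::euclidean_space"
  assumes "h \<ge> 0"
  shows "measure lborel (cbox (M - h *\<^sub>R One) (M + h *\<^sub>R One)) = (2 * h) ^ DIM('a)"
  using content_cbox_plus[of "M - h *\<^sub>R One" "2 * h"] assms by (simp add: algebra_simps)

lemma mem_cbox_centered_matrix:
  fixes A M :: "real^'d^'k"
  assumes "A \<in> cbox (M - h *\<^sub>R One) (M + h *\<^sub>R One)"
  shows "\<bar>A $ k $ d - M $ k $ d\<bar> \<le> h"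
proof -
  let ?b = "axis k (axis d 1) :: real^'d^'k"
  have "?b \<in> Basis"
    by simp
  then have "(M - h *\<^sub>R One) \<bullet> ?b \<le> A \<bullet> ?b \<and> A \<bullet> ?b \<le> (M + h *\<^sub>R One) \<bullet> ?b"
    using assms by (simp add: mem_box)
  moreover have "One \<bullet> ?b = 1"
    using \<open>?b \<in> Basis\<close> by simp
  ultimately show ?thesis
    by (simp add: inner_diff_left inner_add_left inner_axis_axis abs_le_iff)
qed

lemma prod_Basis_matrix:
  fixes f :: "real^'d^'k \<Rightarrow> real"
  shows "(\<Prod>b\<in>Basis. f b) = (\<Prod>k\<in>UNIV. \<Prod>d\<in>UNIV. f (axis k (axis d 1)))"
proof -
  let ?e = "\<lambda>(k, d). axis k (axis d 1) :: real^'d^'k"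
  have "Basis = range ?e"
    by (auto elim!: Basis_matrix_cases)
  moreover have "inj ?e"
    by (auto simp: inj_def axis_eq_axis)
  ultimately have "(\<Prod>b\<in>Basis. f b) = (\<Prod>p\<in>UNIV. f (?e p))"
    by (metis (no_types, lifting) prod.reindex_cong)
  then show ?thesis
    by (simp add: prod.cartesian_product case_prod_unfold flip: UNIV_Times_UNIV)
qed

lemma normal_density_antimono_abs:
  assumes "\<bar>x\<bar> \<le> r"
  shows "normal_density 0 \<sigma> r \<le> normal_density 0 \<sigma> x"
proof -
  have "x\<^sup>2 \<le> r\<^sup>2"
    using power_mono[OF assms, of 2] by simp
  then show ?thesis
    unfolding normal_density_def by (intro mult_left_mono exp_mono divide_right_mono) auto
qed

lemma exp_neg_inverse_tendsto_0:
  assumes "l > (0::real)"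
  shows "((\<lambda>s. exp (- l / (2 * s))) \<longlongrightarrow> 0) (at_right 0)"
  using assms by real_asymp

lemma mult_ln_tendsto_0_of_bounds:
  fixes f :: "real \<Rightarrow> real"
  assumes "c > 0" and "\<forall>\<^sub>F x in at_right 0. c * x powr a \<le> f x \<and> f x \<le> 1"
  shows "((\<lambda>x. x * ln (f x)) \<longlongrightarrow> 0) (at_right 0)"
proof -
  have bounds: "x * (ln c + a * ln x) \<le> x * ln (f x) \<and> x * ln (f x) \<le> 0"
    if "0 < x" "c * x powr a \<le> f x" "f x \<le> 1" for x
  proof -
    have "0 < c * x powr a"
      using assms(1) that(1) by simp
    with that have "ln (c * x powr a) \<le> ln (f x)" and "ln (f x) \<le> 0"
      by auto
    moreover have "ln (c * x powr a) = ln c + a * ln x"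
      using that(1) assms(1) by (simp add: ln_mult ln_powr)
    ultimately show ?thesis
      using that(1) by (simp add: mult_nonneg_nonpos)
  qed
  have ev: "\<forall>\<^sub>F x in at_right 0. x * (ln c + a * ln x) \<le> x * ln (f x) \<and> x * ln (f x) \<le> 0"
    using assms(2) eventually_at_right_less[of "0::real"] by eventually_elim (use bounds in blast)
  have "((\<lambda>x::real. x * ln x) \<longlongrightarrow> 0) (at_right 0)"
    by real_asymp
  then have "((\<lambda>x. ln c * x + a * (x * ln x)) \<longlongrightarrow> ln c * 0 + a * 0) (at_right 0)"
    by (intro tendsto_add tendsto_mult tendsto_const tendsto_ident_at)
  moreover have "x * (ln c + a * ln x) = ln c * x + a * (x * ln x)" for x
    by (simp add: algebra_simps)
  ultimately have lower: "((\<lambda>x. x * (ln c + a * ln x)) \<longlongrightarrow> 0) (at_right 0)"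
    by simp
  show ?thesis
    by (rule tendsto_sandwich[OF eventually_mono[OF ev] eventually_mono[OF ev] lower tendsto_const])
      simp_all
qed

lemma mult_ln_tendsto_0_of_tendsto:
  fixes f :: "real \<Rightarrow> real"
  assumes "(f \<longlongrightarrow> L) (at_right 0)" "L \<noteq> 0"
  shows "((\<lambda>x. x * ln (f x)) \<longlongrightarrow> 0) (at_right 0)"
  using tendsto_mult[OF tendsto_ident_at tendsto_ln[OF assms]] by simp

definition cluster_of :: "real^'k^'n \<Rightarrow> 'n \<Rightarrow> 'k" where
  "cluster_of Z n = (THE k. Z $ n $ k = 1)"

lemma clustering_entry:
  assumes "clustering Z"
  shows "Z $ n $ k = (if k = cluster_of Z n then 1 else 0)"
proof -
  from assms have unique: "\<exists>!k. Z $ n $ k = 1" and binary: "Z $ n $ k = 0 \<or> Z $ n $ k = 1"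
    unfolding clustering_def by auto
  have "Z $ n $ cluster_of Z n = 1"
    unfolding cluster_of_def by (rule theI'[OF unique])
  with unique binary show ?thesis by auto
qed

lemma clustering_members:
  "clustering Z \<Longrightarrow> {n. Z $ n $ k = 1} = {n. cluster_of Z n = k}"
  by (auto simp: clustering_entry)

lemma csize_eq_card:
  "clustering Z \<Longrightarrow> csize Z k = card {n. cluster_of Z n = k}"
  by (simp add: csize_def clustering_members)

lemma csize_pos:
  assumes "clustering Z"
  shows "csize Z k > 0"
proof -
  from assms obtain n where "Z $ n $ k \<noteq> 0"
    unfolding clustering_def by blast
  then have "cluster_of Z n = k"
    using clustering_entry[OF assms, of n k] by (auto split: if_splits)
  then show ?thesis
    by (auto simp: csize_eq_card[OF assms] card_gt_0_iff)
qed

lemma sum_by_cluster: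
  fixes Z :: "real^'k::finite^'n::finite"
  shows "(\<Sum>n\<in>UNIV. f n) = (\<Sum>k\<in>UNIV. \<Sum>n | cluster_of Z n = k. f n)"
  using sum.group[of "UNIV :: 'n::finite set" "UNIV :: 'k::finite set" "cluster_of Z" f] by simp

lemma clustering_mult_row:
  assumes "clustering Z"
  shows "(Z ** A) $ n = A $ cluster_of Z n"
  by (simp add: vec_eq_iff matrix_matrix_mult_def clustering_entry[OF assms]
      if_distrib[of "\<lambda>c. c * _"] cong: if_cong)

lemma transpose_clustering_mult_row:
  assumes "clustering Z"
  shows "(transpose Z ** X) $ k = (\<Sum>n | cluster_of Z n = k. X $ n)"
  by (simp add: vec_eq_iff matrix_matrix_mult_def transpose_def clustering_entry[OF assms]
      sum_component if_distrib[of "\<lambda>c. c * _"] sum.If_cases eq_commute cong: if_cong)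

lemma gram_clustering:
  assumes "clustering Z"
  shows "transpose Z ** Z = diag_mat (\<lambda>k. real (csize Z k))"
proof -
  have "(transpose Z ** Z) $ k = real (csize Z k) *s axis k 1" for k
  proof -
    have "(transpose Z ** Z) $ k = (\<Sum>n | cluster_of Z n = k. axis k 1)"
      unfolding transpose_clustering_mult_row[OF assms]
      by (intro sum.cong refl) (simp add: vec_eq_iff axis_def clustering_entry[OF assms])
    then show ?thesis
      by (simp add: csize_eq_card[OF assms] scalar_mult_eq_scaleR sum_constant_scaleR
          del: sum_constant)
  qed
  then show ?thesis
    by (simp add: vec_eq_iff diag_mat_def axis_def)
qed

lemma centroid_matrix:
  assumes "clustering Z"
  shows "matrix_inv (transpose Z ** Z) ** (transpose Z ** X) = (\<chi> k. cmean X Z k)"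
proof -
  have "csize Z k \<noteq> 0" for k
    using csize_pos[OF assms] by (simp add: gr0_conv_Suc)
  then have inv: "matrix_inv (transpose Z ** Z) = diag_mat (\<lambda>k. 1 / real (csize Z k))"
    by (simp add: gram_clustering[OF assms] matrix_inv_diag_mat inverse_eq_divide)
  show ?thesis
    by (simp add: inv vec_eq_iff diag_mat_mult_row transpose_clustering_mult_row[OF assms]
        cmean_def clustering_members[OF assms] scalar_mult_eq_scaleR sum_component)
qed

lemma cluster_deviations_sum_zero:
  assumes "clustering Z"
  shows "(\<Sum>n | cluster_of Z n = k. X $ n - cmean X Z k) = 0"
proof -
  have "real (csize Z k) \<noteq> 0"
    using csize_pos[OF assms] by simp
  then show ?thesis
    by (simp add: sum_subtractf cmean_def clustering_members[OF assms] csize_eq_card[OF assms]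
        sum_constant_scaleR del: sum_constant)
qed

lemma cluster_deviations_orthogonal:
  assumes "clustering Z"
  shows "(\<Sum>n\<in>UNIV. (X $ n - cmean X Z (cluster_of Z n)) \<bullet> v (cluster_of Z n)) = 0"
proof -
  have "(\<Sum>n\<in>UNIV. (X $ n - cmean X Z (cluster_of Z n)) \<bullet> v (cluster_of Z n))
      = (\<Sum>k\<in>UNIV. (\<Sum>n | cluster_of Z n = k. X $ n - cmean X Z k) \<bullet> v k)"
    by (subst sum_by_cluster[of _ Z]) (simp add: inner_sum_left)
  then show ?thesis
    by (simp add: cluster_deviations_sum_zero[OF assms])
qed

definition within_ss :: "real^'d^'n \<Rightarrow> real^'k^'n \<Rightarrow> real" where
  "within_ss X Z = (\<Sum>n\<in>UNIV. (norm (X $ n - cmean X Z (cluster_of Z n)))\<^sup>2)"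

definition centroid_misfit :: "real^'d^'n \<Rightarrow> real^'k^'n \<Rightarrow> real^'d^'k \<Rightarrow> real" where
  "centroid_misfit X Z A = (\<Sum>n\<in>UNIV. (norm (cmean X Z (cluster_of Z n) - A $ cluster_of Z n))\<^sup>2)"

lemma residual_trace_decomposition:
  assumes "clustering Z"
  shows "trace (transpose (X - Z ** A) ** (X - Z ** A)) = within_ss X Z + centroid_misfit X Z A"
proof -
  let ?dev = "\<lambda>n. X $ n - cmean X Z (cluster_of Z n)"
  let ?off = "\<lambda>k. cmean X Z k - A $ k"
  have "(norm (X $ n - A $ cluster_of Z n))\<^sup>2
      = (norm (?dev n))\<^sup>2 + (norm (?off (cluster_of Z n)))\<^sup>2 + 2 * (?dev n \<bullet> ?off (cluster_of Z n))"
    for n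
    using dot_norm[of "?dev n" "?off (cluster_of Z n)"] by simp
  then have "trace (transpose (X - Z ** A) ** (X - Z ** A))
      = within_ss X Z + centroid_misfit X Z A + 2 * (\<Sum>n\<in>UNIV. ?dev n \<bullet> ?off (cluster_of Z n))"
    by (simp add: trace_transpose_mult clustering_mult_row[OF assms]
        power2_norm_eq_inner[symmetric] within_ss_def centroid_misfit_def sum.distrib sum_distrib_left)
  then show ?thesis
    using cluster_deviations_orthogonal[OF assms, of X ?off] by simp
qed

lemma proj_obj_eq_within_ss:
  fixes Z :: "real^'k^'n"
  assumes "clustering Z"
  shows "proj_obj lambda2 X Z = within_ss X Z + (real CARD('k) - 1) * lambda2"
proof -
  let ?dev = "\<lambda>n. X $ n - cmean X Z (cluster_of Z n)"
  have "(mat 1 - Z ** matrix_inv (transpose Z ** Z) ** transpose Z) ** X = (\<chi> n. ?dev n)"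
    by (simp add: matrix_mult_diff_rdistrib matrix_mul_assoc[symmetric] centroid_matrix[OF assms]
        clustering_mult_row[OF assms] vec_eq_iff)
  then have "trace (transpose X ** (mat 1 - Z ** matrix_inv (transpose Z ** Z) ** transpose Z) ** X)
      = (\<Sum>n\<in>UNIV. X $ n \<bullet> ?dev n)"
    by (simp add: matrix_mul_assoc[symmetric] trace_transpose_mult)
  also have "\<dots> = within_ss X Z + (\<Sum>n\<in>UNIV. ?dev n \<bullet> cmean X Z (cluster_of Z n))"
    by (simp add: within_ss_def power2_norm_eq_inner inner_diff_left inner_commute
        sum.distrib[symmetric])
  finally show ?thesis
    by (simp add: proj_obj_def cluster_deviations_orthogonal[OF assms])
qed

lemma kmeans_obj_eq_within_ss:
  fixes Z :: "real^'k^'n"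
  assumes "clustering Z"
  shows "kmeans_obj lambda2 X Z = within_ss X Z + (real CARD('k) - 1) * lambda2"
  by (simp add: kmeans_obj_def within_ss_def clustering_members[OF assms] sum_by_cluster[of _ Z])

lemma prior_dens_eq_prod_Basis:
  "prior_dens rho2 A = (\<Prod>b\<in>Basis. normal_density 0 (sqrt rho2) (A \<bullet> b))"
  unfolding prior_dens_def prod_Basis_matrix inner_axis_axis ..

lemma prior_dens_nonneg: "prior_dens rho2 A \<ge> 0"
  unfolding prior_dens_def by (intro prod_nonneg) auto

lemma borel_measurable_prior_dens [measurable]:
  "prior_dens rho2 \<in> borel_measurable (lborel :: (real^'d^'k) measure)"
  unfolding prior_dens_eq_prod_Basis[abs_def] by measurable

lemma nn_integral_prior_dens:
  assumes "rho2 > 0"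
  shows "(\<integral>\<^sup>+A. ennreal (prior_dens rho2 (A::real^'d^'k)) \<partial>lborel) = 1"
proof -
  have "(\<integral>\<^sup>+A. ennreal (prior_dens rho2 (A::real^'d^'k)) \<partial>lborel)
      = (\<integral>\<^sup>+A. (\<Prod>b\<in>Basis. ennreal (normal_density 0 (sqrt rho2) ((A::real^'d^'k) \<bullet> b))) \<partial>lborel)"
    unfolding prior_dens_eq_prod_Basis by (simp add: prod_ennreal normal_density_nonneg)
  also have "\<dots> = (\<Prod>b\<in>(Basis::(real^'d^'k) set).
      \<integral>\<^sup>+x. ennreal (normal_density 0 (sqrt rho2) x) \<partial>lborel)"
    by (rule nn_integral_lborel_prod) auto
  also have "\<dots> = 1"
    using assms by (simp add: nn_integral_eq_integral normal_density_nonneg)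
  finally show ?thesis .
qed

lemma integrable_prior_dens:
  "rho2 > 0 \<Longrightarrow> integrable lborel (prior_dens rho2 :: real^'d^'k \<Rightarrow> real)"
  by (rule integrableI_nonneg) (auto simp: prior_dens_nonneg nn_integral_prior_dens)

lemma integral_prior_dens:
  "rho2 > 0 \<Longrightarrow> (LINT A|lborel. prior_dens rho2 (A::real^'d^'k)) = 1"
  by (simp add: integral_eq_nn_integral prior_dens_nonneg nn_integral_prior_dens)

lemma prior_dens_lower_bound:
  assumes "\<And>k d. \<bar>A $ k $ d\<bar> \<le> r"
  shows "normal_density 0 (sqrt rho2) r ^ (CARD('k) * CARD('d)) \<le> prior_dens rho2 (A::real^'d^'k)"
proof -
  have "normal_density 0 (sqrt rho2) r ^ (CARD('k) * CARD('d))
      = (\<Prod>k\<in>(UNIV::'k set). \<Prod>d\<in>(UNIV::'d set). normal_density 0 (sqrt rho2) r)"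
    by (simp add: power_mult mult.commute)
  also have "\<dots> \<le> prior_dens rho2 A"
    unfolding prior_dens_def
    by (intro prod_mono conjI prod_nonneg normal_density_antimono_abs assms) auto
  finally show ?thesis .
qed

definition centroid_evidence :: "real \<Rightarrow> real \<Rightarrow> real^'d^'n \<Rightarrow> real^'k^'n \<Rightarrow> real" where
  "centroid_evidence s2 rho2 X Z =
     (LINT A|lborel. exp (- centroid_misfit X Z A / (2 * s2)) * prior_dens rho2 (A::real^'d^'k))"

lemma marg_lik_eq_centroid_evidence:
  fixes X :: "real^'d^'n" and Z :: "real^'k^'n"
  assumes "clustering Z"
  shows "marg_lik s2 rho2 X Z = (2 * pi * s2) powr (- real (CARD('n) * CARD('d)) / 2)
     * exp (- within_ss X Z / (2 * s2)) * centroid_evidence s2 rho2 X Z"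
proof -
  have "lik s2 X Z A = (2 * pi * s2) powr (- real (CARD('n) * CARD('d)) / 2)
      * exp (- within_ss X Z / (2 * s2)) * exp (- centroid_misfit X Z A / (2 * s2))" for A
    by (simp add: lik_def residual_trace_decomposition[OF assms] diff_divide_distrib
        flip: exp_add)
  then show ?thesis
    by (simp add: marg_lik_def centroid_evidence_def mult.assoc)
qed

lemma borel_measurable_centroid_misfit [measurable]:
  "centroid_misfit X Z \<in> borel_measurable lborel"
proof -
  have "continuous_on UNIV (centroid_misfit X Z)"
    unfolding centroid_misfit_def[abs_def] by (intro continuous_intros)
  then show ?thesis
    by (simp add: borel_measurable_continuous_onI measurable_lborel2)
qed

lemma centroid_evidence_integrand_le:
  assumes "s2 > 0"
  shows "exp (- centroid_misfit X Z A / (2 * s2)) * prior_dens rho2 A \<le> prior_dens rho2 A"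
proof -
  have "centroid_misfit X Z A \<ge> 0"
    unfolding centroid_misfit_def by (intro sum_nonneg) auto
  with assms have "exp (- centroid_misfit X Z A / (2 * s2)) \<le> 1"
    by simp
  then show ?thesis
    by (simp add: mult_left_le_one_le prior_dens_nonneg)
qed

lemma integrable_centroid_evidence:
  assumes "rho2 > 0" "s2 > 0"
  shows "integrable lborel
    (\<lambda>A::real^'d^'k. exp (- centroid_misfit X Z A / (2 * s2)) * prior_dens rho2 A)"
proof (rule Bochner_Integration.integrable_bound[OF integrable_prior_dens[OF assms(1)]])
  show "AE A in lborel. norm (exp (- centroid_misfit X Z A / (2 * s2)) * prior_dens rho2 A)
      \<le> norm (prior_dens rho2 A)"
    using centroid_evidence_integrand_le[OF assms(2)]
    by (auto intro!: AE_I2 simp: prior_dens_nonneg)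
qed measurable

lemma centroid_evidence_le_1:
  fixes X :: "real^'d^'n" and Z :: "real^'k^'n"
  assumes "rho2 > 0" "s2 > 0"
  shows "centroid_evidence s2 rho2 X Z \<le> 1"
proof -
  have "centroid_evidence s2 rho2 X Z \<le> (LINT A|lborel. prior_dens rho2 (A::real^'d^'k))"
    unfolding centroid_evidence_def
    by (intro integral_mono integrable_centroid_evidence integrable_prior_dens assms
        centroid_evidence_integrand_le)
  then show ?thesis
    by (simp add: integral_prior_dens[OF assms(1)])
qed

lemma centroid_misfit_le:
  fixes X :: "real^'d^'n" and Z :: "real^'k^'n"
  assumes "\<And>k d. \<bar>A $ k $ d - cmean X Z k $ d\<bar> \<le> h"
  shows "centroid_misfit X Z A \<le> real (CARD('n) * CARD('d)) * h\<^sup>2"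
proof -
  have "(norm (cmean X Z k - A $ k))\<^sup>2 \<le> (\<Sum>d\<in>(UNIV::'d set). h\<^sup>2)" for k
  proof -
    have "(A $ k $ d - cmean X Z k $ d)\<^sup>2 \<le> h\<^sup>2" for d
      using power_mono[OF assms[of k d], of 2] by simp
    then show ?thesis
      unfolding power2_norm_eq_inner inner_vec_def
      by (intro sum_mono) (simp add: power2_eq_square algebra_simps)
  qed
  then have "centroid_misfit X Z A \<le> (\<Sum>n\<in>(UNIV::'n set). \<Sum>d\<in>(UNIV::'d set). h\<^sup>2)"
    unfolding centroid_misfit_def by (intro sum_mono)
  then show ?thesis
    by simp
qed

lemma centroid_evidence_integrand_ge:
  fixes X :: "real^'d^'n" and Z :: "real^'k^'n"
  assumes "0 < s2" "s2 \<le> 1"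
    and near: "\<And>k d. \<bar>A $ k $ d - cmean X Z k $ d\<bar> \<le> sqrt s2"
  shows "exp (- real (CARD('n) * CARD('d)) / 2)
      * normal_density 0 (sqrt rho2) (norm (\<chi> k. cmean X Z k) + 1) ^ (CARD('k) * CARD('d))
    \<le> exp (- centroid_misfit X Z A / (2 * s2)) * prior_dens rho2 A"
proof (rule mult_mono)
  have "centroid_misfit X Z A \<le> real (CARD('n) * CARD('d)) * s2"
    using centroid_misfit_le[of A X Z "sqrt s2"] near \<open>0 < s2\<close> by simp
  then show "exp (- real (CARD('n) * CARD('d)) / 2) \<le> exp (- centroid_misfit X Z A / (2 * s2))"
    using \<open>0 < s2\<close> by (simp add: field_simps)
  let ?M = "\<chi> k. cmean X Z k"
  have "\<bar>A $ k $ d\<bar> \<le> norm ?M + 1" for k d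
    using near[of k d] component_le_norm_cart[of "cmean X Z k" d]
      Finite_Cartesian_Product.norm_nth_le[of ?M k, simplified]
      real_sqrt_le_1_iff[of s2] \<open>s2 \<le> 1\<close>
    by linarith
  then show "normal_density 0 (sqrt rho2) (norm ?M + 1) ^ (CARD('k) * CARD('d))
      \<le> prior_dens rho2 A"
    by (rule prior_dens_lower_bound)
qed (simp_all add: prior_dens_nonneg)

lemma centroid_evidence_lower_bound:
  fixes X :: "real^'d^'n" and Z :: "real^'k^'n"
  assumes "rho2 > 0"
  obtains c where "c > 0"
    and "\<And>s2. 0 < s2 \<Longrightarrow> s2 \<le> 1 \<Longrightarrow>
           c * s2 powr (real (CARD('k) * CARD('d)) / 2) \<le> centroid_evidence s2 rho2 X Z"
proof
  define M :: "real^'d^'k" where "M = (\<chi> k. cmean X Z k)"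
  define m where "m = CARD('k) * CARD('d)"
  define c0 where "c0 = exp (- real (CARD('n) * CARD('d)) / 2)
    * normal_density 0 (sqrt rho2) (norm M + 1) ^ m"
  have "c0 > 0"
    using assms by (simp add: c0_def normal_density_pos)
  then show "c0 * 2 ^ m > 0"
    by simp
  fix s2 :: real
  assume "0 < s2" "s2 \<le> 1"
  let ?B = "cbox (M - sqrt s2 *\<^sub>R One) (M + sqrt s2 *\<^sub>R One)"
  have "indicator ?B A * c0 \<le> exp (- centroid_misfit X Z A / (2 * s2)) * prior_dens rho2 A"
    for A :: "real^'d^'k"
    using centroid_evidence_integrand_ge[OF \<open>0 < s2\<close> \<open>s2 \<le> 1\<close>, of A X Z rho2]
      mem_cbox_centered_matrix[of A M "sqrt s2"]
    by (cases "A \<in> ?B") (simp_all add: c0_def m_def M_def prior_dens_nonneg)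
  moreover have "integrable lborel (\<lambda>A. indicator ?B A * c0)"
    using emeasure_lborel_cbox_finite
    by (intro integrable_mult_left integrable_real_indicator) (auto simp: top_unique)
  ultimately have "(LINT A|lborel. indicator ?B A * c0) \<le> centroid_evidence s2 rho2 X Z"
    unfolding centroid_evidence_def
    by (intro integral_mono integrable_centroid_evidence assms \<open>0 < s2\<close>)
  moreover have "measure lborel ?B = 2 ^ m * s2 powr (real m / 2)"
    using \<open>0 < s2\<close> by (simp add: measure_lborel_cbox_centered m_def power_mult_distrib
        powr_power flip: powr_half_sqrt)
  ultimately show "c0 * 2 ^ m * s2 powr (real (CARD('k) * CARD('d)) / 2)
      \<le> centroid_evidence s2 rho2 X Z"
    by (simp add: m_def mult_ac)
qed

lemma eventually_centroid_evidence_bounds: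
  fixes X :: "real^'d^'n" and Z :: "real^'k^'n"
  assumes "rho2 > 0"
  obtains c where "c > 0" and "\<forall>\<^sub>F s2 in at_right 0. 0 < s2
    \<and> c * s2 powr (real (CARD('k) * CARD('d)) / 2) \<le> centroid_evidence s2 rho2 X Z
    \<and> centroid_evidence s2 rho2 X Z \<le> 1"
proof -
  obtain c where "c > 0" and lower: "\<And>s2. 0 < s2 \<Longrightarrow> s2 \<le> 1 \<Longrightarrow>
      c * s2 powr (real (CARD('k) * CARD('d)) / 2) \<le> centroid_evidence s2 rho2 X Z"
    using centroid_evidence_lower_bound[OF assms] by blast
  have "\<forall>\<^sub>F s2 in at_right 0. 0 < s2 \<and> s2 \<le> (1::real)"
    unfolding eventually_at_right_field by (intro exI[of _ 1]) auto
  then have "\<forall>\<^sub>F s2 in at_right 0. 0 < s2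
      \<and> c * s2 powr (real (CARD('k) * CARD('d)) / 2) \<le> centroid_evidence s2 rho2 X Z
      \<and> centroid_evidence s2 rho2 X Z \<le> 1"
    by eventually_elim (intro conjI lower centroid_evidence_le_1 assms; simp)
  with \<open>c > 0\<close> show ?thesis
    using that by blast
qed

lemma eventually_centroid_evidence_pos:
  fixes X :: "real^'d^'n" and Z :: "real^'k^'n"
  assumes "rho2 > 0"
  shows "\<forall>\<^sub>F s2 in at_right 0. centroid_evidence s2 rho2 X Z > 0"
proof -
  obtain c where "c > 0" and bounds: "\<forall>\<^sub>F s2 in at_right 0. 0 < s2
      \<and> c * s2 powr (real (CARD('k) * CARD('d)) / 2) \<le> centroid_evidence s2 rho2 X Z
      \<and> centroid_evidence s2 rho2 X Z \<le> 1"
    using eventually_centroid_evidence_bounds[OF assms] by blast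
  from bounds show ?thesis
    by eventually_elim (use \<open>c > 0\<close> in \<open>smt (verit) mult_pos_pos powr_gt_zero\<close>)
qed

lemma eventually_marg_lik_pos:
  fixes X :: "real^'d^'n" and Z :: "real^'k^'n"
  assumes "clustering Z" "rho2 > 0"
  shows "\<forall>\<^sub>F s2 in at_right 0. marg_lik s2 rho2 X Z > 0"
  using eventually_centroid_evidence_pos[OF assms(2), of X Z] eventually_at_right_less[of "0::real"]
  by eventually_elim (simp add: marg_lik_eq_centroid_evidence[OF assms(1)])

lemma scaled_log_marg_lik_tendsto:
  fixes X :: "real^'d^'n" and Z :: "real^'k^'n"
  assumes "clustering Z" "rho2 > 0"
  shows "((\<lambda>s2. - 2 * s2 * ln (marg_lik s2 rho2 X Z)) \<longlongrightarrow> within_ss X Z) (at_right 0)"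
proof -
  let ?ND = "real (CARD('n) * CARD('d))"
  let ?J = "\<lambda>s2. centroid_evidence s2 rho2 X Z"
  obtain c where "c > 0" and bounds: "\<forall>\<^sub>F s2 in at_right 0. 0 < s2
      \<and> c * s2 powr (real (CARD('k) * CARD('d)) / 2) \<le> ?J s2 \<and> ?J s2 \<le> 1"
    using eventually_centroid_evidence_bounds[OF assms(2)] by blast
  have "\<forall>\<^sub>F s2 in at_right 0. - 2 * s2 * ln (marg_lik s2 rho2 X Z)
      = within_ss X Z + ?ND * (s2 * ln (2 * pi * s2)) - 2 * (s2 * ln (?J s2))"
    using bounds eventually_centroid_evidence_pos[OF assms(2), of X Z]
    by eventually_elim
      (simp add: marg_lik_eq_centroid_evidence[OF assms(1)] ln_mult ln_powr field_simps)
  moreover have "((\<lambda>s2. within_ss X Z + ?ND * (s2 * ln (2 * pi * s2)) - 2 * (s2 * ln (?J s2)))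
      \<longlongrightarrow> within_ss X Z + ?ND * 0 - 2 * 0) (at_right 0)"
  proof (intro tendsto_intros)
    show "((\<lambda>s2::real. s2 * ln (2 * pi * s2)) \<longlongrightarrow> 0) (at_right 0)"
      by real_asymp
    show "((\<lambda>s2. s2 * ln (?J s2)) \<longlongrightarrow> 0) (at_right 0)"
      using bounds by (intro mult_ln_tendsto_0_of_bounds[OF \<open>c > 0\<close>]) (auto elim: eventually_mono)
  qed
  ultimately show ?thesis
    by (simp add: tendsto_cong)
qed

lemma crp_prob_pos: "\<theta> > 0 \<Longrightarrow> crp_prob \<theta> (Z::real^'k^'n) > 0"
  unfolding crp_prob_def
  by (intro mult_pos_pos divide_pos_pos prod_pos zero_less_power Gamma_real_pos) auto

lemma scaled_log_crp_prob_tendsto: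
  fixes Z :: "real^'k^'n"
  assumes "lambda2 > 0"
  shows "((\<lambda>s2. - 2 * s2 * ln (crp_prob (exp (- lambda2 / (2 * s2))) Z))
    \<longlongrightarrow> (real CARD('k) - 1) * lambda2) (at_right 0)"
proof -
  define r where "r \<theta> = Gamma (\<theta> + 1) / Gamma (\<theta> + real CARD('n))
    * (\<Prod>k\<in>UNIV. fact (csize Z k - 1))" for \<theta>
  let ?\<theta> = "\<lambda>s2. exp (- lambda2 / (2 * s2))"
  have log_crp: "- 2 * s2 * ln (crp_prob (?\<theta> s2) Z)
      = (real CARD('k) - 1) * lambda2 - 2 * (s2 * ln (r (?\<theta> s2)))" if "s2 > 0" for s2
  proof -
    have "crp_prob (?\<theta> s2) Z = ?\<theta> s2 ^ (CARD('k) - 1) * r (?\<theta> s2)"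
      by (simp add: crp_prob_def r_def)
    moreover have "r (?\<theta> s2) > 0"
      unfolding r_def
      by (intro mult_pos_pos divide_pos_pos prod_pos Gamma_real_pos) (simp_all add: add_pos_pos)
    moreover have "real (CARD('k) - 1) = real CARD('k) - 1"
      by (simp add: Suc_le_eq of_nat_diff)
    ultimately show ?thesis
      using that by (simp add: ln_mult ln_realpow field_simps)
  qed
  have "\<forall>\<^sub>F s2 in at_right 0. - 2 * s2 * ln (crp_prob (?\<theta> s2) Z)
      = (real CARD('k) - 1) * lambda2 - 2 * (s2 * ln (r (?\<theta> s2)))"
    using eventually_at_right_less[of "0::real"] by (rule eventually_mono) (rule log_crp)
  moreover have "((\<lambda>s2. (real CARD('k) - 1) * lambda2 - 2 * (s2 * ln (r (?\<theta> s2))))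
      \<longlongrightarrow> (real CARD('k) - 1) * lambda2 - 2 * 0) (at_right 0)"
  proof (intro tendsto_intros mult_ln_tendsto_0_of_tendsto)
    have "0 < real CARD('n)"
      by simp
    then have Gamma_N: "Gamma (real CARD('n)) \<noteq> 0"
      by (metis Gamma_real_pos less_irrefl)
    with exp_neg_inverse_tendsto_0[OF assms]
    show "((\<lambda>s2. r (?\<theta> s2)) \<longlongrightarrow> r 0) (at_right 0)"
      unfolding r_def by (intro tendsto_intros) (auto dest: nonpos_Ints_nonpos)
    show "r 0 \<noteq> 0"
      using Gamma_N by (simp add: r_def)
  qed
  ultimately show ?thesis
    by (simp add: tendsto_cong)
qed

lemma scaled_log_joint_tendsto:
  fixes X :: "real^'d^'n" and Z :: "real^'k^'n"
  assumes "clustering Z" "lambda2 > 0" "rho2 > 0"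
  shows "((\<lambda>s2. - 2 * s2 * ln (joint lambda2 rho2 s2 X Z))
    \<longlongrightarrow> within_ss X Z + (real CARD('k) - 1) * lambda2) (at_right 0)"
proof -
  have log_joint: "- 2 * s2 * ln (joint lambda2 rho2 s2 X Z)
      = - 2 * s2 * ln (marg_lik s2 rho2 X Z)
        + - 2 * s2 * ln (crp_prob (exp (- lambda2 / (2 * s2))) Z)"
    if "marg_lik s2 rho2 X Z > 0" for s2
  proof -
    have "crp_prob (exp (- lambda2 / (2 * s2))) Z > 0"
      by (rule crp_prob_pos) simp
    with that show ?thesis
      by (simp add: joint_def ln_mult distrib_left)
  qed
  have "\<forall>\<^sub>F s2 in at_right 0. - 2 * s2 * ln (joint lambda2 rho2 s2 X Z)
      = - 2 * s2 * ln (marg_lik s2 rho2 X Z)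
        + - 2 * s2 * ln (crp_prob (exp (- lambda2 / (2 * s2))) Z)"
    using eventually_marg_lik_pos[OF assms(1,3), of X]
    by (rule eventually_mono) (rule log_joint)
  moreover have "((\<lambda>s2. - 2 * s2 * ln (marg_lik s2 rho2 X Z)
        + - 2 * s2 * ln (crp_prob (exp (- lambda2 / (2 * s2))) Z))
      \<longlongrightarrow> within_ss X Z + (real CARD('k) - 1) * lambda2) (at_right 0)"
    by (intro tendsto_add scaled_log_marg_lik_tendsto scaled_log_crp_prob_tendsto assms)
  ultimately show ?thesis
    by (subst tendsto_cong) auto
qed

theorem mainTheorem4:
  fixes X :: "real^'d^'n" and Z :: "real^'k^'n" and lambda2 rho2 :: real
  assumes "lambda2 > 0" and "rho2 > 0" and "clustering Z"
    and "proj_obj lambda2 X Z \<noteq> 0"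
  shows "(\<lambda>s2. - 2 * s2 * ln (joint lambda2 rho2 s2 X Z)) \<sim>[at_right 0] (\<lambda>_. proj_obj lambda2 X Z)
         \<and> proj_obj lambda2 X Z = kmeans_obj lambda2 X Z"
proof
  have "((\<lambda>s2. - 2 * s2 * ln (joint lambda2 rho2 s2 X Z)) \<longlongrightarrow> proj_obj lambda2 X Z) (at_right 0)"
    using scaled_log_joint_tendsto[OF assms(3,1,2)]
    by (simp add: proj_obj_eq_within_ss[OF assms(3)])
  then show "(\<lambda>s2. - 2 * s2 * ln (joint lambda2 rho2 s2 X Z))
      \<sim>[at_right 0] (\<lambda>_. proj_obj lambda2 X Z)"
    using assms(4) by (rule tendsto_imp_asymp_equiv_const)
  show "proj_obj lambda2 X Z = kmeans_obj lambda2 X Z"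
    by (simp add: proj_obj_eq_within_ss[OF assms(3)] kmeans_obj_eq_within_ss[OF assms(3)])
qed

end
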